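(* Let $A\in\mathbb{C}^{n\times n}$ and let $\|\cdot\|$ be any vector norm on $\mathbb{C}^n$ with induced matrix norm. Then $\inf_{t\in\mathbb{R}}\|Q_1(t)\|>0$, and for every $u\in\mathbb{C}^n$ satisfying the RLGE condition, $\inf_{t\in\mathbb{R}}\|Q_1(t)u\|>0$. Consequently, for $y_0\neq0$ and unit $\hat z_0$ both satisfying the RLGE condition, the functions $t\mapsto \|Q_1(t)\hat z_0\|/\|Q_1(t)\hat y_0\|$ and $t\mapsto \|Q_1(t)\|/\|Q_1(t)\hat y_0\|$ are bounded on $\mathbb{R}$ and bounded away from $0$ on $\mathbb{R}$.
   Context: $\hat y_0=y_0/\|y_0\|$. Let $\lambda_1,\dots,\lambda_p$ be the distinct eigenvalues of $A$, $\omega_i=\operatorname{Im}\lambda_i$. Fix a Jordan basis $v^{(i,j,k)}$, $i\in\{1,\dots,p\}$, $j\in\{1,\dots,d_i\}$ ($d_i$ the geometric multiplicity of $\lambda_i$), $k\in\{1,\dots,m_{ij}\}$, consisting of Jordan chains: $(A-\lambda_iI)v^{(i,j,1)}=0$, $(A-\lambda_iI)v^{(i,j,k)}=v^{(i,j,k-1)}$ for $k\ge2$. Let $V$ be the matrix with these columns in lexicographic order of $(i,j,k)$ and $w^{(i,j,k)}$ the rows of $V^{-1}$ in the same order; $\alpha_{ijk}(u)=w^{(i,j,k)}u$. $\Lambda_1$ is the set of eigenvalues with maximal real part, $M_1=\max_{\lambda_i\in\Lambda_1}\max_j m_{ij}$, and $$Q_1(t)=\sum_{\lambda_i\in\Lambda_1,\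 j\in\{1,\dots,d_i\},\ m_{ij}=M_1} e^{\sqrt{-1}\,\omega_i t}\,v^{(i,j,1)}w^{(i,j,M_1)}.$$ $u$ satisfies the RLGE condition if $\alpha_{ijM_1}(u)\neq0$ for some $(i,j)$ with $\lambda_i\in\Lambda_1$, $m_{ij}=M_1$. *)

theory Defs
  imports "HOL-Analysis.Analysis"
begin

definition is_vec_norm :: "(complex^'n \<Rightarrow> real) \<Rightarrow> bool" where
  "is_vec_norm N \<longleftrightarrow>
     (\<forall>x. N x = 0 \<longleftrightarrow> x = 0) \<and>
     (\<forall>c x. N (c *s x) = cmod c * N x) \<and>
     (\<forall>x y. N (x + y) \<le> N x + N y)"

definition ind_norm :: "(complex^'n \<Rightarrow> real) \<Rightarrow> complex^'n^'n \<Rightarrow> real" where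
  "ind_norm N M = Sup {N (M *v x) / N x | x. x \<noteq> 0}"

definition jidx :: "nat \<Rightarrow> (nat \<Rightarrow> nat) \<Rightarrow> (nat \<Rightarrow> nat \<Rightarrow> nat) \<Rightarrow> (nat \<times> nat \<times> nat) set" where
  "jidx p d m = {(i,j,k). 1 \<le> i \<and> i \<le> p \<and> 1 \<le> j \<and> j \<le> d i \<and> 1 \<le> k \<and> k \<le> m i j}"

text \<open>The matrix V whose columns are the Jordan basis vectors; column c carries
  the vector with label idx c.\<close>
definition jmat :: "(nat \<Rightarrow> nat \<Rightarrow> nat \<Rightarrow> complex^'n) \<Rightarrow> ('n \<Rightarrow> nat \<times> nat \<times> nat) \<Rightarrow> complex^'n^'n" where
  "jmat v idx = (\<chi> r c. (case idx c of (i,j,k) \<Rightarrow> v i j k) $ r)"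

text \<open>Jordan basis data for A: distinct eigenvalues lam 1..lam p (exactly the
  eigenvalues of A), d i chains for lam i, chain lengths m i j, chain vectors v i j k,
  labelling idx of the columns of V.\<close>
definition jordan_basis ::
  "complex^'n^'n \<Rightarrow> nat \<Rightarrow> (nat \<Rightarrow> complex) \<Rightarrow> (nat \<Rightarrow> nat) \<Rightarrow> (nat \<Rightarrow> nat \<Rightarrow> nat)
     \<Rightarrow> (nat \<Rightarrow> nat \<Rightarrow> nat \<Rightarrow> complex^'n) \<Rightarrow> ('n \<Rightarrow> nat \<times> nat \<times> nat) \<Rightarrow> bool" where
  "jordan_basis A p lam d m v idx \<longleftrightarrow>
     inj_on lam {1..p} \<and>
     lam ` {1..p} = {\<mu>. \<exists>x. x \<noteq> 0 \<and> A *v x = \<mu> *s x} \<and>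
     (\<forall>i\<in>{1..p}. 1 \<le> d i \<and> (\<forall>j\<in>{1..d i}. 1 \<le> m i j)) \<and>
     (\<forall>i\<in>{1..p}. \<forall>j\<in>{1..d i}.
        (A - mat (lam i)) *v v i j 1 = 0 \<and>
        (\<forall>k\<in>{2..m i j}. (A - mat (lam i)) *v v i j k = v i j (k - 1))) \<and>
     bij_betw idx UNIV (jidx p d m) \<and>
     invertible (jmat v idx)"

definition jrow :: "(nat \<Rightarrow> nat \<Rightarrow> nat \<Rightarrow> complex^'n) \<Rightarrow> ('n \<Rightarrow> nat \<times> nat \<times> nat)
     \<Rightarrow> nat \<Rightarrow> nat \<Rightarrow> nat \<Rightarrow> complex^'n" where
  "jrow v idx i j k = row (inv idx (i,j,k)) (matrix_inv (jmat v idx))"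

definition jcoord :: "(nat \<Rightarrow> nat \<Rightarrow> nat \<Rightarrow> complex^'n) \<Rightarrow> ('n \<Rightarrow> nat \<times> nat \<times> nat)
     \<Rightarrow> nat \<Rightarrow> nat \<Rightarrow> nat \<Rightarrow> complex^'n \<Rightarrow> complex" where
  "jcoord v idx i j k u = (\<Sum>c\<in>UNIV. jrow v idx i j k $ c * u $ c)"

definition Lam1 :: "nat \<Rightarrow> (nat \<Rightarrow> complex) \<Rightarrow> nat set" where
  "Lam1 p lam = {i\<in>{1..p}. \<forall>i'\<in>{1..p}. Re (lam i') \<le> Re (lam i)}"

definition M1 :: "nat \<Rightarrow> (nat \<Rightarrow> complex) \<Rightarrow> (nat \<Rightarrow> nat) \<Rightarrow> (nat \<Rightarrow> nat \<Rightarrow> nat) \<Rightarrow> nat" where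
  "M1 p lam d m = Max {m i j | i j. i \<in> Lam1 p lam \<and> j \<in> {1..d i}}"

definition Q1 :: "nat \<Rightarrow> (nat \<Rightarrow> complex) \<Rightarrow> (nat \<Rightarrow> nat) \<Rightarrow> (nat \<Rightarrow> nat \<Rightarrow> nat)
     \<Rightarrow> (nat \<Rightarrow> nat \<Rightarrow> nat \<Rightarrow> complex^'n) \<Rightarrow> ('n \<Rightarrow> nat \<times> nat \<times> nat) \<Rightarrow> real \<Rightarrow> complex^'n^'n" where
  "Q1 p lam d m v idx t =
     (\<Sum>(i,j)\<in>{(i,j). i \<in> Lam1 p lam \<and> j \<in> {1..d i} \<and> m i j = M1 p lam d m}.
        (\<chi> r c. exp (\<i> * of_real (Im (lam i)) * of_real t) *
           (v i j 1 $ r * jrow v idx i j (M1 p lam d m) $ c)))"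

definition rlge :: "nat \<Rightarrow> (nat \<Rightarrow> complex) \<Rightarrow> (nat \<Rightarrow> nat) \<Rightarrow> (nat \<Rightarrow> nat \<Rightarrow> nat)
     \<Rightarrow> (nat \<Rightarrow> nat \<Rightarrow> nat \<Rightarrow> complex^'n) \<Rightarrow> ('n \<Rightarrow> nat \<times> nat \<times> nat) \<Rightarrow> complex^'n \<Rightarrow> bool" where
  "rlge p lam d m v idx u \<longleftrightarrow>
     (\<exists>i j. i \<in> Lam1 p lam \<and> j \<in> {1..d i} \<and> m i j = M1 p lam d m \<and>
        jcoord v idx i j (M1 p lam d m) u \<noteq> 0)"

end

theory Submission
  imports Defs
begin

text \<open>For every chain (i, j) entering Q_1, the vector v^(i,j,1) belongs to the Jordan
  basis, so the corresponding coordinate of Q_1(t) u is e^(i \<omega>_i t) \<alpha>_{ijM_1}(u), whose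
  modulus does not depend on t. Coordinate functionals are bounded by a multiple of any norm
  on \<complex>^n, so one nonzero \<alpha>_{ijM_1}(u) bounds \<parallel>Q_1(t) u\<parallel> from below uniformly in t, while
  |e^(i \<omega> t)| = 1 gives a uniform upper bound. The basis vector v^(i,j,M_1) of a longest
  chain satisfies the RLGE condition, which bounds the induced norm of Q_1(t) from below.
  Both ratios are then quotients of functions trapped between positive constants.\<close>

lemma vec_norm_zero: "is_vec_norm N \<Longrightarrow> N 0 = 0"
  unfolding is_vec_norm_def by blast

lemma vec_norm_scale: "is_vec_norm N \<Longrightarrow> N (c *s x) = cmod c * N x"
  unfolding is_vec_norm_def by blast

lemma vec_norm_triangle: "is_vec_norm N \<Longrightarrow> N (x + y) \<le> N x + N y"
  unfolding is_vec_norm_def by blast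

lemma vec_norm_minus_commute:
  assumes "is_vec_norm N" shows "N (x - y) = N (y - x)"
proof -
  have "N (x - y) = N ((-1) *s (y - x))"
    by (rule arg_cong[where f = N]) (simp add: vec_eq_iff)
  also have "\<dots> = N (y - x)"
    using vec_norm_scale[OF assms, of "-1" "y - x"] by simp
  finally show ?thesis .
qed

lemma vec_norm_nonneg:
  assumes "is_vec_norm N" shows "0 \<le> N x"
proof -
  have "N 0 \<le> N x + N (0 - x)"
    using vec_norm_triangle[OF assms, of x "0 - x"] by simp
  then show ?thesis
    using vec_norm_zero[OF assms] vec_norm_minus_commute[OF assms, of 0 x] by simp
qed

lemma vec_norm_pos:
  assumes "is_vec_norm N" "x \<noteq> 0" shows "0 < N x"
proof -
  have "N x \<noteq> 0" using assms unfolding is_vec_norm_def by blast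
  then show ?thesis using vec_norm_nonneg[OF assms(1), of x] by linarith
qed

lemma vec_norm_sum_le:
  assumes "is_vec_norm N" "finite S"
  shows "N (\<Sum>s\<in>S. f s) \<le> (\<Sum>s\<in>S. N (f s))"
  using assms(2)
proof (induction S rule: finite_induct)
  case empty
  then show ?case using vec_norm_zero[OF assms(1)] by simp
next
  case (insert a S)
  then show ?case using vec_norm_triangle[OF assms(1), of "f a" "sum f S"] by simp
qed

lemma vec_norm_le_norm:
  fixes N :: "complex^'n \<Rightarrow> real"
  assumes "is_vec_norm N"
  shows "\<exists>K>0. \<forall>x. N x \<le> K * norm x"
proof -
  define K where "K = (\<Sum>i\<in>UNIV. N (axis i 1)) + 1"
  have "N x \<le> K * norm x" for x
  proof -
    have "N x = N (\<Sum>i\<in>UNIV. x $ i *s axis i 1)" by (simp only: basis_expansion)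
    also have "\<dots> \<le> (\<Sum>i\<in>UNIV. N (x $ i *s axis i 1))"
      by (rule vec_norm_sum_le[OF assms]) simp
    also have "\<dots> = (\<Sum>i\<in>UNIV. cmod (x $ i) * N (axis i 1))"
      by (simp add: vec_norm_scale[OF assms])
    also have "\<dots> \<le> (\<Sum>i\<in>UNIV. norm x * N (axis i 1))"
      by (intro sum_mono mult_right_mono Finite_Cartesian_Product.norm_nth_le vec_norm_nonneg[OF assms])
    also have "\<dots> \<le> K * norm x"
      by (simp add: K_def sum_distrib_left algebra_simps)
    finally show ?thesis .
  qed
  moreover have "K > 0"
    unfolding K_def by (simp add: add_nonneg_pos sum_nonneg vec_norm_nonneg[OF assms])
  ultimately show ?thesis by blast
qed

lemma vec_norm_continuous_on:
  fixes N :: "complex^'n \<Rightarrow> real"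
  assumes "is_vec_norm N"
  shows "continuous_on S N"
proof -
  obtain K where K: "K > 0" "\<And>x. N x \<le> K * norm x"
    using vec_norm_le_norm[OF assms] by blast
  have "dist (N x) (N y) \<le> K * dist x y" for x y
    using vec_norm_triangle[OF assms, of "x - y" y] vec_norm_triangle[OF assms, of "y - x" x]
      vec_norm_minus_commute[OF assms, of x y] K(2)[of "x - y"]
    by (simp add: dist_real_def dist_norm abs_le_iff)
  then have "K-lipschitz_on S N"
    by (intro lipschitz_onI) (auto simp: K(1) less_imp_le)
  then show ?thesis by (rule lipschitz_on_continuous_on)
qed

lemma of_real_smult_eq_scaleR: "complex_of_real r *s x = r *\<^sub>R x"
  by (simp add: vec_eq_iff of_real_def)

lemma vec_norm_scaleR: "is_vec_norm N \<Longrightarrow> N (r *\<^sub>R x) = \<bar>r\<bar> * N x"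
  using vec_norm_scale[of N "of_real r" x] by (simp only: of_real_smult_eq_scaleR norm_of_real)

lemma vec_norm_ge_norm:
  fixes N :: "complex^'n \<Rightarrow> real"
  assumes "is_vec_norm N"
  shows "\<exists>k>0. \<forall>x. k * norm x \<le> N x"
proof -
  have "sphere (0 :: complex^'n) 1 \<noteq> {}" by (simp add: sphere_eq_empty)
  then obtain x0 where x0: "x0 \<in> sphere 0 1" and min: "\<And>y. y \<in> sphere 0 1 \<Longrightarrow> N x0 \<le> N y"
    using continuous_attains_inf[OF compact_sphere _ vec_norm_continuous_on[OF assms]] by blast
  have "N x0 * norm x \<le> N x" for x
  proof (cases "x = 0")
    case False
    let ?y = "(1 / norm x) *\<^sub>R x"
    have "N x0 \<le> N ?y" using False by (simp add: min)
    also have "\<dots> = N x / norm x" by (simp add: vec_norm_scaleR[OF assms])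
    finally show ?thesis using False by (simp add: field_simps)
  qed (simp add: vec_norm_zero[OF assms])
  moreover have "0 < N x0" using x0 by (intro vec_norm_pos[OF assms]) auto
  ultimately show ?thesis by blast
qed

lemma vec_norm_bounds_matrix_image:
  fixes N :: "complex^'n \<Rightarrow> real" and B :: "complex^'n^'m"
  assumes "is_vec_norm N"
  shows "\<exists>K>0. \<forall>x. norm (B *v x) \<le> K * N x"
proof -
  obtain k where k: "k > 0" "\<And>x. k * norm x \<le> N x"
    using vec_norm_ge_norm[OF assms] by blast
  obtain L where L: "L > 0" "\<And>x. norm (B *v x) \<le> norm x * L"
    using bounded_linear.pos_bounded[OF matrix_vector_mul_bounded_linear] by blast
  have "norm (B *v x) \<le> L / k * N x" for x
  proof -
    have "norm x * L \<le> N x / k * L"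
      using k L(1) by (intro mult_right_mono) (auto simp: pos_le_divide_eq mult.commute)
    then show ?thesis using L(2)[of x] by (simp add: field_simps)
  qed
  then show ?thesis using k(1) L(1) by (intro exI[of _ "L / k"]) simp
qed

lemma vec_norm_matrix_bounded:
  fixes N :: "complex^'n \<Rightarrow> real" and M :: "complex^'n^'n"
  assumes "is_vec_norm N"
  shows "\<exists>D. \<forall>x. N (M *v x) \<le> D * N x"
proof -
  obtain K where K: "K > 0" "\<And>y. N y \<le> K * norm y"
    using vec_norm_le_norm[OF assms] by blast
  obtain L where L: "\<And>x. norm (M *v x) \<le> L * N x"
    using vec_norm_bounds_matrix_image[OF assms] by blast
  have "N (M *v x) \<le> (K * L) * N x" for x
  proof -
    have "N (M *v x) \<le> K * norm (M *v x)" by (rule K(2))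
    also have "\<dots> \<le> K * (L * N x)" using K(1) L by (intro mult_left_mono) auto
    finally show ?thesis by (simp add: mult.assoc)
  qed
  then show ?thesis by blast
qed

lemma ratio_le_ind_norm:
  fixes N :: "complex^'n \<Rightarrow> real"
  assumes "is_vec_norm N" "x \<noteq> 0"
  shows "N (M *v x) / N x \<le> ind_norm N M"
  unfolding ind_norm_def
proof (rule cSup_upper)
  show "N (M *v x) / N x \<in> {N (M *v x) / N x |x. x \<noteq> 0}" using assms(2) by blast
  obtain D where D: "\<And>y. N (M *v y) \<le> D * N y"
    using vec_norm_matrix_bounded[OF assms(1)] by blast
  show "bdd_above {N (M *v x) / N x |x. x \<noteq> 0}"
    using D vec_norm_pos[OF assms(1)] by (intro bdd_aboveI[of _ D]) (auto simp: pos_divide_le_eq)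
qed

lemma ind_norm_le:
  fixes N :: "complex^'n \<Rightarrow> real"
  assumes "is_vec_norm N" "\<And>x. N (M *v x) \<le> D * N x"
  shows "ind_norm N M \<le> D"
  unfolding ind_norm_def
proof (rule cSup_least)
  have "axis undefined 1 \<noteq> (0 :: complex^'n)" by simp
  then show "{N (M *v x) / N x |x. x \<noteq> 0} \<noteq> {}" by blast
qed (use assms vec_norm_pos[OF assms(1)] in \<open>auto simp: pos_divide_le_eq\<close>)

lemma matrix_inv_mult_left:
  assumes "invertible A" shows "matrix_inv A ** A = mat 1"
  using someI_ex[OF assms[unfolded invertible_def]] unfolding matrix_inv_def by blast

lemma matrix_vector_mult_axis: "(A::'a::comm_semiring_1^'n^'m) *v axis c 1 = column c A"
  by (simp add: vec_eq_iff matrix_vector_mult_def column_def axis_def if_distrib[of "(*) _"] cong: if_cong)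

lemma jcoord_eq_component:
  "jcoord v idx i j k u = (matrix_inv (jmat v idx) *v u) $ inv idx (i, j, k)"
  by (simp add: jcoord_def jrow_def row_def matrix_vector_mult_def)

lemma jcoord_sum: "jcoord v idx i j k (\<Sum>s\<in>S. f s) = (\<Sum>s\<in>S. jcoord v idx i j k (f s))"
  unfolding jcoord_def by (simp add: sum_distrib_left) (rule sum.swap)

lemma jcoord_scale: "jcoord v idx i j k (c *s u) = c * jcoord v idx i j k u"
  unfolding jcoord_def by (simp add: sum_distrib_left mult_ac)

lemma jcoord_bounded:
  fixes N :: "complex^'n \<Rightarrow> real" and idx :: "'n \<Rightarrow> nat \<times> nat \<times> nat"
  assumes "is_vec_norm N"
  shows "\<exists>K>0. \<forall>i j k u. cmod (jcoord v idx i j k u) \<le> K * N u"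
proof -
  obtain K where K: "K > 0" "\<And>u. norm (matrix_inv (jmat v idx) *v u) \<le> K * N u"
    using vec_norm_bounds_matrix_image[OF assms] by blast
  have "cmod (jcoord v idx i j k u) \<le> K * N u" for i j k u
    using Finite_Cartesian_Product.norm_nth_le[of "matrix_inv (jmat v idx) *v u" "inv idx (i, j, k)"]
      K(2)[of u]
    unfolding jcoord_eq_component by linarith
  then show ?thesis using K(1) by blast
qed

lemma rlge_scale:
  "c \<noteq> 0 \<Longrightarrow> rlge p lam d m v idx (c *s u) \<longleftrightarrow> rlge p lam d m v idx u"
  by (simp add: rlge_def jcoord_scale)

lemma rlge_nonzero: "rlge p lam d m v idx u \<Longrightarrow> u \<noteq> 0"
  by (auto simp: rlge_def jcoord_def)

lemma INF_pos_if_uniform_lower_bound: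
  fixes f :: "'a \<Rightarrow> real"
  assumes "0 < l" "\<And>t. l \<le> f t"
  shows "0 < (INF t. f t)"
proof -
  have "l \<le> (INF t. f t)" by (rule cINF_greatest) (auto intro: assms(2))
  then show ?thesis using assms(1) by linarith
qed

lemma ratio_bounded_and_bounded_away_from_zero:
  fixes f g :: "'a \<Rightarrow> real"
  assumes "0 < a" "\<And>t. a \<le> f t" "\<And>t. f t \<le> A"
    and "0 < b" "\<And>t. b \<le> g t" "\<And>t. g t \<le> B"
  shows "(\<exists>K. \<forall>t. \<bar>f t / g t\<bar> \<le> K) \<and> (\<exists>c>0. \<forall>t. c \<le> f t / g t)"
proof
  have f_pos: "0 < f t" and g_pos: "0 < g t" for t
    using assms(1) assms(2)[of t] assms(4) assms(5)[of t] by linarith+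
  have "0 \<le> A" and "0 < B"
    using f_pos[of undefined] assms(3)[of undefined] g_pos[of undefined] assms(6)[of undefined]
    by linarith+
  have "\<bar>f t / g t\<bar> \<le> A / b" for t
  proof -
    have "f t / g t \<le> A / b"
      using \<open>0 \<le> A\<close> assms(3)[of t] assms(4) assms(5)[of t] by (rule frac_le)
    then show ?thesis using f_pos[of t] g_pos[of t] by simp
  qed
  then show "\<exists>K. \<forall>t. \<bar>f t / g t\<bar> \<le> K" by blast
  have "a / B \<le> f t / g t" for t
    using less_imp_le[OF f_pos[of t]] assms(2)[of t] g_pos[of t] assms(6)[of t] by (rule frac_le)
  moreover have "0 < a / B" using assms(1) \<open>0 < B\<close> by simp
  ultimately show "\<exists>c>0. \<forall>t. c \<le> f t / g t" by blast
qed

locale jordan_data =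
  fixes A :: "complex^'n^'n" and p :: nat and lam :: "nat \<Rightarrow> complex" and d :: "nat \<Rightarrow> nat"
    and m :: "nat \<Rightarrow> nat \<Rightarrow> nat" and v :: "nat \<Rightarrow> nat \<Rightarrow> nat \<Rightarrow> complex^'n"
    and idx :: "'n \<Rightarrow> nat \<times> nat \<times> nat"
  assumes jordan_basis: "jordan_basis A p lam d m v idx"
begin

abbreviation Q :: "real \<Rightarrow> complex^'n^'n" where
  "Q \<equiv> Q1 p lam d m v idx"

abbreviation top_chains :: "(nat \<times> nat) set" where
  "top_chains \<equiv> {(i, j). i \<in> Lam1 p lam \<and> j \<in> {1..d i} \<and> m i j = M1 p lam d m}"

lemma Q1_mult_vec:
  "Q t *v u = (\<Sum>(i, j)\<in>top_chains.
     (exp (\<i> * of_real (Im (lam i)) * of_real t) * jcoord v idx i j (M1 p lam d m) u) *s v i j 1)"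
  unfolding Q1_def
  by (simp add: vec_eq_iff matrix_vector_mult_def case_prod_beta jcoord_def
      sum_distrib_left sum_distrib_right) (subst sum.swap, simp add: mult_ac)

lemma idx_onto: "idx ` UNIV = jidx p d m"
  using jordan_basis by (simp add: jordan_basis_def bij_betw_def)

lemma idx_inv_idx: "x \<in> jidx p d m \<Longrightarrow> idx (inv idx x) = x"
  using idx_onto by (metis f_inv_into_f)

lemma finite_jidx: "finite (jidx p d m)"
  using idx_onto[symmetric] by simp

lemma chain_lengths_pos: "i \<in> {1..p} \<Longrightarrow> 1 \<le> d i \<and> (\<forall>j\<in>{1..d i}. 1 \<le> m i j)"
  using jordan_basis by (simp add: jordan_basis_def)

lemma matrix_inv_mult_chain_vector:
  assumes "(i, j, k) \<in> jidx p d m"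
  shows "matrix_inv (jmat v idx) *v v i j k = axis (inv idx (i, j, k)) 1"
proof -
  let ?c = "inv idx (i, j, k)"
  have "v i j k = jmat v idx *v axis ?c 1"
    using idx_inv_idx[OF assms]
    by (simp add: matrix_vector_mult_axis vec_eq_iff jmat_def column_def)
  moreover have "matrix_inv (jmat v idx) ** jmat v idx = mat 1"
    using jordan_basis by (intro matrix_inv_mult_left) (simp add: jordan_basis_def)
  ultimately show ?thesis by (simp add: matrix_vector_mul_assoc)
qed

lemma jcoord_chain_vector:
  assumes "(i, j, k) \<in> jidx p d m" "(i', j', k') \<in> jidx p d m"
  shows "jcoord v idx i j k (v i' j' k') = (if (i, j, k) = (i', j', k') then 1 else 0)"
proof -
  have "inv idx (i, j, k) = inv idx (i', j', k') \<longleftrightarrow> (i, j, k) = (i', j', k')"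
    using idx_inv_idx[OF assms(1)] idx_inv_idx[OF assms(2)] by metis
  then show ?thesis
    by (simp add: jcoord_eq_component matrix_inv_mult_chain_vector[OF assms(2)] axis_def)
qed

lemma top_chain_in_jidx:
  assumes "(i, j) \<in> top_chains"
  shows "(i, j, 1) \<in> jidx p d m" and "(i, j, M1 p lam d m) \<in> jidx p d m"
proof -
  have "i \<in> {1..p}" "j \<in> {1..d i}" "m i j = M1 p lam d m"
    using assms by (auto simp: Lam1_def)
  moreover have "1 \<le> m i j" using chain_lengths_pos calculation by blast
  ultimately show "(i, j, 1) \<in> jidx p d m" "(i, j, M1 p lam d m) \<in> jidx p d m"
    by (auto simp: jidx_def)
qed

lemma finite_top_chains: "finite top_chains"
proof (rule finite_subset)
  have "(i, j) \<in> (\<lambda>(i, j, k). (i, j)) ` jidx p d m" if "(i, j) \<in> top_chains" for i j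
    using top_chain_in_jidx(1)[OF that] by (rule rev_image_eqI) simp
  then show "top_chains \<subseteq> (\<lambda>(i, j, k). (i, j)) ` jidx p d m" by auto
qed (simp add: finite_jidx)

lemma jcoord_Q1_mult_vec:
  assumes "(i, j) \<in> top_chains"
  shows "jcoord v idx i j 1 (Q t *v u)
    = exp (\<i> * of_real (Im (lam i)) * of_real t) * jcoord v idx i j (M1 p lam d m) u"
proof -
  have "jcoord v idx i j 1 (Q t *v u) =
    (\<Sum>s\<in>top_chains. if s = (i, j) then
        exp (\<i> * of_real (Im (lam i)) * of_real t) * jcoord v idx i j (M1 p lam d m) u else 0)"
    unfolding Q1_mult_vec jcoord_sum
    using top_chain_in_jidx(1)[OF assms] top_chain_in_jidx(1)
    by (intro sum.cong) (auto simp: jcoord_scale jcoord_chain_vector split: if_splits)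
  then show ?thesis using assms finite_top_chains by simp
qed

lemma top_chains_nonempty: "top_chains \<noteq> {}"
proof -
  obtain c where "idx c \<in> jidx p d m" using idx_onto by blast
  then have "p \<ge> 1" by (auto simp: jidx_def)
  let ?R = "(\<lambda>i. Re (lam i)) ` {1..p}"
  have "Max ?R \<in> ?R" using \<open>p \<ge> 1\<close> by (intro Max_in) auto
  then obtain i1 where i1: "i1 \<in> {1..p}" "Max ?R = Re (lam i1)" by blast
  have "Re (lam i') \<le> Re (lam i1)" if "i' \<in> {1..p}" for i'
  proof -
    have "Re (lam i') \<le> Max ?R" using that by (intro Max_ge) auto
    then show ?thesis using i1(2) by simp
  qed
  then have i1_Lam1: "i1 \<in> Lam1 p lam" using i1(1) by (simp add: Lam1_def)
  let ?T = "{m i j | i j. i \<in> Lam1 p lam \<and> j \<in> {1..d i}}"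
  have "m i j \<in> (\<lambda>(i, j, k). m i j) ` jidx p d m" if "i \<in> Lam1 p lam" "j \<in> {1..d i}" for i j
  proof -
    have "(i, j, 1) \<in> jidx p d m"
      using that chain_lengths_pos[of i] by (auto simp: Lam1_def jidx_def)
    then show ?thesis by (rule rev_image_eqI) simp
  qed
  then have "?T \<subseteq> (\<lambda>(i, j, k). m i j) ` jidx p d m" by blast
  then have "finite ?T" using finite_jidx finite_subset by blast
  moreover have "m i1 1 \<in> ?T" using i1_Lam1 chain_lengths_pos[OF i1(1)] by auto
  ultimately have "M1 p lam d m \<in> ?T" unfolding M1_def by (intro Max_in) auto
  then obtain i j where "i \<in> Lam1 p lam" "j \<in> {1..d i}" "m i j = M1 p lam d m" by auto
  then have "(i, j) \<in> top_chains" by simp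
  then show ?thesis by blast
qed

lemma rlge_exists: "\<exists>u. rlge p lam d m v idx u"
proof -
  obtain i j where ij: "(i, j) \<in> top_chains" using top_chains_nonempty by auto
  have "jcoord v idx i j (M1 p lam d m) (v i j (M1 p lam d m)) = 1"
    using top_chain_in_jidx(2)[OF ij] by (simp add: jcoord_chain_vector)
  then have "rlge p lam d m v idx (v i j (M1 p lam d m))"
    using ij unfolding rlge_def by (intro exI[of _ i] exI[of _ j]) auto
  then show ?thesis ..
qed

lemma Q1_vec_norm_upper_bound:
  fixes N :: "complex^'n \<Rightarrow> real"
  assumes N: "is_vec_norm N"
  shows "\<exists>C>0. \<forall>t u. N (Q t *v u) \<le> C * N u"
proof -
  obtain K where K: "K > 0" "\<And>i j k u. cmod (jcoord v idx i j k u) \<le> K * N u"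
    using jcoord_bounded[OF N] by blast
  define C where "C = K * (\<Sum>(i, j)\<in>top_chains. N (v i j 1)) + 1"
  have "N (Q t *v u) \<le> C * N u" for t u
  proof -
    have "N (Q t *v u)
        \<le> (\<Sum>(i, j)\<in>top_chains. cmod (jcoord v idx i j (M1 p lam d m) u) * N (v i j 1))"
      unfolding Q1_mult_vec
      by (rule order_trans[OF vec_norm_sum_le[OF N finite_top_chains]])
        (simp add: case_prod_beta vec_norm_scale[OF N] norm_mult)
    also have "\<dots> \<le> (\<Sum>(i, j)\<in>top_chains. K * N u * N (v i j 1))"
      unfolding case_prod_beta by (intro sum_mono mult_right_mono K(2) vec_norm_nonneg[OF N])
    also have "\<dots> \<le> C * N u"
      using vec_norm_nonneg[OF N, of u]
      by (simp add: C_def case_prod_beta sum_distrib_left sum_distrib_right algebra_simps)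
    finally show ?thesis .
  qed
  moreover have "C > 0"
    unfolding C_def using K(1) vec_norm_nonneg[OF N]
    by (intro add_nonneg_pos mult_nonneg_nonneg sum_nonneg) (auto simp: case_prod_beta)
  ultimately show ?thesis by blast
qed

lemma Q1_vec_norm_lower_bound:
  fixes N :: "complex^'n \<Rightarrow> real"
  assumes N: "is_vec_norm N" and "rlge p lam d m v idx u"
  shows "\<exists>l>0. \<forall>t. l \<le> N (Q t *v u)"
proof -
  obtain i j where ij: "(i, j) \<in> top_chains" and "jcoord v idx i j (M1 p lam d m) u \<noteq> 0"
    using assms(2) unfolding rlge_def by auto
  then have \<alpha>: "cmod (jcoord v idx i j (M1 p lam d m) u) > 0" by simp
  obtain K where K: "K > 0" "\<And>i j k u. cmod (jcoord v idx i j k u) \<le> K * N u"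
    using jcoord_bounded[OF N] by blast
  have "cmod (jcoord v idx i j (M1 p lam d m) u) / K \<le> N (Q t *v u)" for t
  proof -
    have "cmod (jcoord v idx i j (M1 p lam d m) u) = cmod (jcoord v idx i j 1 (Q t *v u))"
      using jcoord_Q1_mult_vec[OF ij, of t u] by (simp add: norm_mult)
    then show ?thesis using K by (simp add: pos_divide_le_eq mult.commute)
  qed
  then show ?thesis using \<alpha> K(1) by (intro exI[of _ "cmod (jcoord v idx i j (M1 p lam d m) u) / K"]) auto
qed

lemma ind_norm_Q1_bounds:
  fixes N :: "complex^'n \<Rightarrow> real"
  assumes N: "is_vec_norm N"
  shows "\<exists>c>0. \<exists>C. \<forall>t. c \<le> ind_norm N (Q t) \<and> ind_norm N (Q t) \<le> C"
proof -
  obtain u where u: "rlge p lam d m v idx u" using rlge_exists ..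
  obtain l where l: "l > 0" "\<And>t. l \<le> N (Q t *v u)"
    using Q1_vec_norm_lower_bound[OF N u] by blast
  obtain C where C: "\<And>t u. N (Q t *v u) \<le> C * N u"
    using Q1_vec_norm_upper_bound[OF N] by blast
  have Nu: "N u > 0" using vec_norm_pos[OF N rlge_nonzero[OF u]] .
  have "l / N u \<le> ind_norm N (Q t)" for t
  proof -
    have "l / N u \<le> N (Q t *v u) / N u"
      using l(2)[of t] Nu by (simp add: divide_right_mono)
    also have "\<dots> \<le> ind_norm N (Q t)"
      by (rule ratio_le_ind_norm[OF N rlge_nonzero[OF u]])
    finally show ?thesis .
  qed
  moreover have "ind_norm N (Q t) \<le> C" for t
    using ind_norm_le[OF N C] .
  ultimately show ?thesis using l(1) Nu by (intro exI[of _ "l / N u"]) auto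
qed


lemma INF_ind_norm_Q1_pos:
  fixes N :: "complex^'n \<Rightarrow> real"
  assumes "is_vec_norm N"
  shows "0 < (INF t. ind_norm N (Q t))"
proof -
  obtain c where "0 < c" "\<And>t. c \<le> ind_norm N (Q t)"
    using ind_norm_Q1_bounds[OF assms] by blast
  then show ?thesis by (rule INF_pos_if_uniform_lower_bound)
qed

lemma INF_vec_norm_Q1_pos:
  fixes N :: "complex^'n \<Rightarrow> real"
  assumes "is_vec_norm N" "rlge p lam d m v idx u"
  shows "0 < (INF t. N (Q t *v u))"
proof -
  obtain l where "0 < l" "\<And>t. l \<le> N (Q t *v u)"
    using Q1_vec_norm_lower_bound[OF assms] by blast
  then show ?thesis by (rule INF_pos_if_uniform_lower_bound)
qed

lemma Q1_ratios_bounded: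
  fixes N :: "complex^'n \<Rightarrow> real"
  assumes N: "is_vec_norm N"
    and y: "rlge p lam d m v idx y" "N y = 1" and z: "rlge p lam d m v idx z" "N z = 1"
  shows "(\<exists>B. \<forall>t. \<bar>N (Q t *v z) / N (Q t *v y)\<bar> \<le> B) \<and> (\<exists>c>0. \<forall>t. c \<le> N (Q t *v z) / N (Q t *v y))
    \<and> (\<exists>B. \<forall>t. \<bar>ind_norm N (Q t) / N (Q t *v y)\<bar> \<le> B) \<and> (\<exists>c>0. \<forall>t. c \<le> ind_norm N (Q t) / N (Q t *v y))"
proof -
  obtain C where C: "\<And>t u. N (Q t *v u) \<le> C * N u"
    using Q1_vec_norm_upper_bound[OF N] by blast
  then have up: "N (Q t *v y) \<le> C" "N (Q t *v z) \<le> C" for t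
    using y(2) z(2) by (metis mult.right_neutral)+
  obtain c C' where c: "0 < c" "\<And>t. c \<le> ind_norm N (Q t)" "\<And>t. ind_norm N (Q t) \<le> C'"
    using ind_norm_Q1_bounds[OF N] by blast
  obtain ly where ly: "0 < ly" "\<And>t. ly \<le> N (Q t *v y)"
    using Q1_vec_norm_lower_bound[OF N y(1)] by blast
  obtain lz where lz: "0 < lz" "\<And>t. lz \<le> N (Q t *v z)"
    using Q1_vec_norm_lower_bound[OF N z(1)] by blast
  show ?thesis
    using ratio_bounded_and_bounded_away_from_zero
        [where f = "\<lambda>t. N (Q t *v z)" and g = "\<lambda>t. N (Q t *v y)", OF lz up(2) ly up(1)]
      ratio_bounded_and_bounded_away_from_zero
        [where f = "\<lambda>t. ind_norm N (Q t)" and g = "\<lambda>t. N (Q t *v y)", OF c ly up(1)]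
    by blast
qed
end

theorem mainTheorem2:
  fixes A :: "complex^'n^'n" and N :: "complex^'n \<Rightarrow> real"
    and p :: nat and lam :: "nat \<Rightarrow> complex" and d :: "nat \<Rightarrow> nat"
    and m :: "nat \<Rightarrow> nat \<Rightarrow> nat" and v :: "nat \<Rightarrow> nat \<Rightarrow> nat \<Rightarrow> complex^'n"
    and idx :: "'n \<Rightarrow> nat \<times> nat \<times> nat"
  assumes norm: "is_vec_norm N"
    and jb: "jordan_basis A p lam d m v idx"
  shows "(INF t. ind_norm N (Q1 p lam d m v idx t)) > 0
    \<and> (\<forall>u. rlge p lam d m v idx u \<longrightarrow> (INF t. N (Q1 p lam d m v idx t *v u)) > 0)
    \<and> (\<forall>y0 z0. y0 \<noteq> 0 \<and> N z0 = 1 \<and> rlge p lam d m v idx y0 \<and> rlge p lam d m v idx z0 \<longrightarrow>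
        (let yh = (1 / N y0) *s y0;
             f = (\<lambda>t. N (Q1 p lam d m v idx t *v z0) / N (Q1 p lam d m v idx t *v yh));
             g = (\<lambda>t. ind_norm N (Q1 p lam d m v idx t) / N (Q1 p lam d m v idx t *v yh))
         in (\<exists>B. \<forall>t. \<bar>f t\<bar> \<le> B) \<and> (\<exists>c>0. \<forall>t. f t \<ge> c)
          \<and> (\<exists>B. \<forall>t. \<bar>g t\<bar> \<le> B) \<and> (\<exists>c>0. \<forall>t. g t \<ge> c)))"
proof -
  interpret jordan_data A p lam d m v idx by (rule jordan_data.intro[OF jb])
  have "let yh = (1 / N y0) *s y0;
            f = (\<lambda>t. N (Q t *v z0) / N (Q t *v yh));
            g = (\<lambda>t. ind_norm N (Q t) / N (Q t *v yh))
        in (\<exists>B. \<forall>t. \<bar>f t\<bar> \<le> B) \<and> (\<exists>c>0. \<forall>t. f t \<ge> c)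
          \<and> (\<exists>B. \<forall>t. \<bar>g t\<bar> \<le> B) \<and> (\<exists>c>0. \<forall>t. g t \<ge> c)"
    if "y0 \<noteq> 0" "N z0 = 1" "rlge p lam d m v idx y0" "rlge p lam d m v idx z0" for y0 z0
  proof -
    have "0 < N y0" using that(1) by (rule vec_norm_pos[OF norm])
    then have "N (complex_of_real (1 / N y0) *s y0) = 1"
      and "rlge p lam d m v idx (complex_of_real (1 / N y0) *s y0)"
      using that(3) by (simp_all add: vec_norm_scale[OF norm] norm_divide rlge_scale)
    then show ?thesis
      unfolding Let_def using Q1_ratios_bounded[OF norm _ _ that(4,2)] by blast
  qed
  then show ?thesis using INF_ind_norm_Q1_pos[OF norm] INF_vec_norm_Q1_pos[OF norm] by blast
qed

end
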